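(* Let $H$ be an inner product space over $\mathbb{K}\in\{\mathbb{R},\mathbb{C}\}$. Let $x,y\in H$ with $x\neq 0$, $y\neq 0$, and let $\delta>0$ be such that $\|x-y\|\le \delta$. (a) If $\|y\|>\delta$, then $$0\le \|x\|^2\|y\|^2-|\langle x,y\rangle|^2\le \|x\|^2\|y\|^2-[\operatorname{Re}\langle x,y\rangle]^2\le \delta^2\|x\|^2 .$$ Moreover, the constant $1$ in front of $\delta^2$ is best possible. That is, for every $k\in(0,1)$ there exist an inner product space $H$, nonzero $x,y\in H$ and $\delta>0$ with $\|x-y\|\le\delta$ and $\|y\|>\delta$ such that $\|x\|^2\|y\|^2-[\operatorname{Re}\langle x,y\rangle]^2> k\,\delta^2\|x\|^2$. (b) If $\|y\|=\delta$, then $$\|x\|^2\le 2\operatorname{Re}\langle x,y\rangle\le 2|\langle x,y\rangle|,$$ and the constant $2$ is best possible in both inequalities. That is, for every $c<2$ there exist such $H,x,y,\delta$ with $\|x-y\|\le\delta=\|y\|$ and $\|x\|^2>c\operatorname{Re}\langle x,y\rangle$, and likewise with $\|x\|^2>c|\langle x,y\rangle|$. (c) If $\|y\|<\delta$, then $$\|x\|^2\le \delta^2-\|y\|^2+2\operatorname{Re}\langle x,y\rangle\le \delta^2-\|y\|^2+2|\langle x,y\rangle|,$$ and the constant $2$ is best possible. That is, for every $c<2$ there exist such $H,x,y,\delta$ with $\|x-y\|\le\delta$, $\|y\|<\delta$ and $\|x\|^2>\delta^2-\|y\|^2+c\operatorname{Re}\langle x,y\rangle$, and likewise with $c|\langle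 x,y\rangle|$ in place of $c\operatorname{Re}\langle x,y\rangle$.
   Context: $\|u\|=\sqrt{\langle u,u\rangle}$ denotes the norm induced by the inner product. *)

theory Defs
  imports "HOL-Analysis.Analysis"
begin

text \<open>Complex inner product spaces (not available in the distribution).
  The inner product is linear in the first argument and conjugate-linear
  in the second; the norm is the induced one.\<close>

class complex_inner = real_normed_vector +
  fixes scaleC :: "complex \<Rightarrow> 'a \<Rightarrow> 'a"
    and cinner :: "'a \<Rightarrow> 'a \<Rightarrow> complex"
  assumes scaleC_add_right: "scaleC a (x + y) = scaleC a x + scaleC a y"
    and scaleC_add_left: "scaleC (a + b) x = scaleC a x + scaleC b x"
    and scaleC_scaleC: "scaleC a (scaleC b x) = scaleC (a * b) x"
    and scaleC_one: "scaleC 1 x = x"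
    and scaleC_of_real: "scaleC (complex_of_real r) x = scaleR r x"
    and cinner_commute: "cinner x y = cnj (cinner y x)"
    and cinner_add_left: "cinner (x + y) z = cinner x z + cinner y z"
    and cinner_scaleC_left: "cinner (scaleC a x) y = a * cinner x y"
    and cinner_self_nonneg: "Im (cinner x x) = 0 \<and> 0 \<le> Re (cinner x x)"
    and cinner_eq_zero_iff: "cinner x x = 0 \<longleftrightarrow> x = 0"
    and norm_eq_sqrt_cinner: "norm x = sqrt (Re (cinner x x))"

end

theory Submission
  imports Defs
begin

text \<open>Everything follows from \<open>\<parallel>x - y\<parallel>\<^sup>2 = \<parallel>x\<parallel>\<^sup>2 - 2 Re \<langle>x,y\<rangle> + \<parallel>y\<parallel>\<^sup>2 \<le> \<delta>\<^sup>2\<close>.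
  Rearranged, this is (c), and (b) is its special case \<open>\<parallel>y\<parallel> = \<delta>\<close>. Multiplying by
  \<open>\<parallel>x\<parallel>\<^sup>2\<close> gives (a), because with \<open>a = \<parallel>x\<parallel>\<^sup>2\<close>, \<open>b = \<parallel>y\<parallel>\<^sup>2\<close>, \<open>p = Re \<langle>x,y\<rangle>\<close>
  the difference \<open>a (a - 2p + b) - (a b - p\<^sup>2)\<close> is the square \<open>(a - p)\<^sup>2\<close>.
  The remaining inequalities are Cauchy-Schwarz and \<open>Re z \<le> \<bar>z\<bar>\<close>.
  All bounds become equalities when \<open>\<parallel>x - y\<parallel> = \<delta>\<close> and, for (a), \<open>x \<bottom> y - x\<close>;
  witnesses with \<open>\<langle>x,y\<rangle> > 0\<close> then show that the constants are best possible.\<close>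

lemma cinner_zero_left [simp]: "cinner 0 y = 0"
  using cinner_add_left[of 0 0 y] by simp

lemma cinner_minus_left: "cinner (- x) y = - cinner x y"
  using cinner_scaleC_left[of "-1" x y] scaleC_of_real[of "-1" x] by simp

lemma cinner_diff_left: "cinner (x - z) y = cinner x y - cinner z y"
  using cinner_add_left[of x "- z" y] by (simp add: cinner_minus_left)

lemma cinner_diff_right: "cinner x (y - z) = cinner x y - cinner x z"
  by (metis cinner_commute cinner_diff_left complex_cnj_diff)

lemma cinner_scaleC_right: "cinner x (scaleC a y) = cnj a * cinner x y"
  by (metis cinner_commute cinner_scaleC_left complex_cnj_mult)

lemma cinner_self_eq_Re: "cinner x x = complex_of_real (Re (cinner x x))"
  using cinner_self_nonneg[of x] by (simp add: complex_eq_iff)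

lemma power2_norm_eq_cinner: "(norm x)\<^sup>2 = Re (cinner x x)"
  using cinner_self_nonneg[of x] by (simp add: norm_eq_sqrt_cinner)

lemma power2_norm_diff_cinner:
  "(norm (x - y))\<^sup>2 = (norm x)\<^sup>2 - 2 * Re (cinner x y) + (norm y)\<^sup>2"
proof -
  have "Re (cinner y x) = Re (cinner x y)"
    by (subst cinner_commute) simp
  then show ?thesis
    by (simp add: power2_norm_eq_cinner cinner_diff_left cinner_diff_right)
qed

lemma Cauchy_Schwarz_cinner:
  "(cmod (cinner x y))\<^sup>2 \<le> (norm x)\<^sup>2 * (norm y)\<^sup>2"
proof (cases "x = 0")
  case True
  then show ?thesis by simp
next
  case False
  define A B p where "A = Re (cinner x x)" and "B = Re (cinner y y)" and "p = cinner x y"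
  \<comment> \<open>\<open>w\<close> is orthogonal to \<open>x\<close>, and \<open>\<langle>w,w\<rangle> = A (A B - \<bar>p\<bar>\<^sup>2)\<close>\<close>
  define w where "w = scaleC (of_real A) y - scaleC (cnj p) x"
  have xx: "cinner x x = of_real A" and yy: "cinner y y = of_real B"
    unfolding A_def B_def by (rule cinner_self_eq_Re)+
  have yx: "cinner y x = cnj p"
    unfolding p_def by (rule cinner_commute)
  have "cinner x w = 0"
    unfolding w_def by (simp add: cinner_diff_right cinner_scaleC_right xx p_def)
  moreover have "cinner y w = of_real A * of_real B - p * cnj p"
    unfolding w_def by (simp add: cinner_diff_right cinner_scaleC_right yy yx)
  ultimately have "cinner w w = of_real A * (of_real A * of_real B - p * cnj p)"
    unfolding w_def by (simp add: cinner_diff_left cinner_scaleC_left)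
  moreover have "Re (p * cnj p) = (cmod p)\<^sup>2"
    by (simp only: complex_norm_square[symmetric] Re_complex_of_real)
  ultimately have "Re (cinner w w) = A * (A * B - (cmod p)\<^sup>2)"
    by simp
  moreover have "0 < A"
  proof -
    have "A \<noteq> 0"
      using False xx cinner_eq_zero_iff[of x] by auto
    with cinner_self_nonneg[of x] show ?thesis
      unfolding A_def by simp
  qed
  ultimately have "(cmod p)\<^sup>2 \<le> A * B"
    using cinner_self_nonneg[of w] by (simp add: zero_le_mult_iff)
  then show ?thesis
    by (simp add: power2_norm_eq_cinner A_def B_def p_def)
qed

lemma gram_le_of_diff_le:
  fixes a b p d :: real
  assumes "a - 2 * p + b \<le> d\<^sup>2" and "0 \<le> a"
  shows "a * b - p\<^sup>2 \<le> d\<^sup>2 * a"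
proof -
  have "a * b - p\<^sup>2 \<le> a * (a - 2 * p + b)"
    using zero_le_power2[of "a - p"] by (simp add: power2_eq_square algebra_simps)
  also have "\<dots> \<le> a * d\<^sup>2"
    using assms by (simp add: mult_left_mono)
  finally show ?thesis
    by (simp add: mult.commute)
qed

lemma inner_bounds_of_norm_diff_le:
  fixes x y :: "'a::real_inner"
  assumes "norm (x - y) \<le> \<delta>"
  shows "(norm x)\<^sup>2 * (norm y)\<^sup>2 - (inner x y)\<^sup>2 \<le> \<delta>\<^sup>2 * (norm x)\<^sup>2"
    and "(norm x)\<^sup>2 \<le> \<delta>\<^sup>2 - (norm y)\<^sup>2 + 2 * inner x y"
proof -
  have "(norm x)\<^sup>2 - 2 * inner x y + (norm y)\<^sup>2 \<le> \<delta>\<^sup>2"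
    using power_mono[OF assms norm_ge_zero, of 2] dot_norm_neg[of x y] by simp
  then show "(norm x)\<^sup>2 * (norm y)\<^sup>2 - (inner x y)\<^sup>2 \<le> \<delta>\<^sup>2 * (norm x)\<^sup>2"
    and "(norm x)\<^sup>2 \<le> \<delta>\<^sup>2 - (norm y)\<^sup>2 + 2 * inner x y"
    by (simp_all add: gram_le_of_diff_le)
qed

lemma cinner_bounds_of_norm_diff_le:
  fixes x y :: "'a::complex_inner"
  assumes "norm (x - y) \<le> \<delta>"
  shows "(norm x)\<^sup>2 * (norm y)\<^sup>2 - (Re (cinner x y))\<^sup>2 \<le> \<delta>\<^sup>2 * (norm x)\<^sup>2"
    and "(norm x)\<^sup>2 \<le> \<delta>\<^sup>2 - (norm y)\<^sup>2 + 2 * Re (cinner x y)"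
proof -
  have "(norm x)\<^sup>2 - 2 * Re (cinner x y) + (norm y)\<^sup>2 \<le> \<delta>\<^sup>2"
    using power_mono[OF assms norm_ge_zero, of 2] power2_norm_diff_cinner[of x y] by simp
  then show "(norm x)\<^sup>2 * (norm y)\<^sup>2 - (Re (cinner x y))\<^sup>2 \<le> \<delta>\<^sup>2 * (norm x)\<^sup>2"
    and "(norm x)\<^sup>2 \<le> \<delta>\<^sup>2 - (norm y)\<^sup>2 + 2 * Re (cinner x y)"
    by (simp_all add: gram_le_of_diff_le)
qed

lemma gram_eq_if_orthogonal_diff:
  fixes x y :: "'a::real_inner"
  assumes "inner x (y - x) = 0"
  shows "(norm x)\<^sup>2 * (norm y)\<^sup>2 - (inner x y)\<^sup>2 = (norm (x - y))\<^sup>2 * (norm x)\<^sup>2"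
proof -
  have "inner x y = (norm x)\<^sup>2"
    using assms by (simp add: inner_diff_right power2_norm_eq_inner)
  then show ?thesis
    using dot_norm_neg[of x y] by (simp add: power2_eq_square algebra_simps)
qed

lemma gram_bound_attained:
  "\<exists>(x::complex) y (\<delta>::real). x \<noteq> 0 \<and> y \<noteq> 0 \<and> 0 < \<delta> \<and> norm (x - y) \<le> \<delta> \<and> \<delta> < norm y \<and>
     (norm x)\<^sup>2 * (norm y)\<^sup>2 - (inner x y)\<^sup>2 = \<delta>\<^sup>2 * (norm x)\<^sup>2"
proof -
  have gram: "(norm (1::complex))\<^sup>2 * (norm (1 + \<i>))\<^sup>2 - (inner 1 (1 + \<i>))\<^sup>2
      = (norm (1 - (1 + \<i>)))\<^sup>2 * (norm (1::complex))\<^sup>2"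
    by (rule gram_eq_if_orthogonal_diff) (simp add: inner_complex_def)
  have "1 < norm (1 + \<i>)"
    by (simp add: cmod_def real_less_rsqrt)
  with gram show ?thesis
    by (intro exI[of _ 1] exI[of _ "1 + \<i>"] exI[of _ "1::real"]) (auto simp: complex_eq_iff)
qed

lemma twice_inner_bound_attained:
  "\<exists>(x::complex) y (\<delta>::real). x \<noteq> 0 \<and> y \<noteq> 0 \<and> 0 < \<delta> \<and> norm (x - y) \<le> \<delta> \<and> norm y = \<delta> \<and>
     0 < inner x y \<and> (norm x)\<^sup>2 = 2 * inner x y"
  by (rule exI[of _ 2], rule exI[of _ 1], rule exI[of _ 1]) (simp add: inner_complex_def)

lemma polarization_bound_attained:
  "\<exists>(x::complex) y (\<delta>::real). x \<noteq> 0 \<and> y \<noteq> 0 \<and> 0 < \<delta> \<and> norm (x - y) \<le> \<delta> \<and> norm y < \<delta> \<and>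
     0 < inner x y \<and> (norm x)\<^sup>2 = \<delta>\<^sup>2 - (norm y)\<^sup>2 + 2 * inner x y"
  by (rule exI[of _ 3], rule exI[of _ 1], rule exI[of _ 2]) (simp add: inner_complex_def)

theorem theorem1:
  shows
  \<comment> \<open>Real inner product spaces\<close>
  "(\<forall>(x::'a::real_inner) y (\<delta>::real).
      x \<noteq> 0 \<longrightarrow> y \<noteq> 0 \<longrightarrow> \<delta> > 0 \<longrightarrow> norm (x - y) \<le> \<delta> \<longrightarrow>
      (norm y > \<delta> \<longrightarrow>
         0 \<le> (norm x)\<^sup>2 * (norm y)\<^sup>2 - \<bar>inner x y\<bar>\<^sup>2 \<and>
         (norm x)\<^sup>2 * (norm y)\<^sup>2 - \<bar>inner x y\<bar>\<^sup>2 \<le> (norm x)\<^sup>2 * (norm y)\<^sup>2 - (inner x y)\<^sup>2 \<and>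
         (norm x)\<^sup>2 * (norm y)\<^sup>2 - (inner x y)\<^sup>2 \<le> \<delta>\<^sup>2 * (norm x)\<^sup>2) \<and>
      (norm y = \<delta> \<longrightarrow>
         (norm x)\<^sup>2 \<le> 2 * inner x y \<and> 2 * inner x y \<le> 2 * \<bar>inner x y\<bar>) \<and>
      (norm y < \<delta> \<longrightarrow>
         (norm x)\<^sup>2 \<le> \<delta>\<^sup>2 - (norm y)\<^sup>2 + 2 * inner x y \<and>
         \<delta>\<^sup>2 - (norm y)\<^sup>2 + 2 * inner x y \<le> \<delta>\<^sup>2 - (norm y)\<^sup>2 + 2 * \<bar>inner x y\<bar>))
  \<and>
  \<comment> \<open>Complex inner product spaces\<close>
   (\<forall>(x::'b::complex_inner) y (\<delta>::real).
      x \<noteq> 0 \<longrightarrow> y \<noteq> 0 \<longrightarrow> \<delta> > 0 \<longrightarrow> norm (x - y) \<le> \<delta> \<longrightarrow>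
      (norm y > \<delta> \<longrightarrow>
         0 \<le> (norm x)\<^sup>2 * (norm y)\<^sup>2 - (cmod (cinner x y))\<^sup>2 \<and>
         (norm x)\<^sup>2 * (norm y)\<^sup>2 - (cmod (cinner x y))\<^sup>2 \<le> (norm x)\<^sup>2 * (norm y)\<^sup>2 - (Re (cinner x y))\<^sup>2 \<and>
         (norm x)\<^sup>2 * (norm y)\<^sup>2 - (Re (cinner x y))\<^sup>2 \<le> \<delta>\<^sup>2 * (norm x)\<^sup>2) \<and>
      (norm y = \<delta> \<longrightarrow>
         (norm x)\<^sup>2 \<le> 2 * Re (cinner x y) \<and> 2 * Re (cinner x y) \<le> 2 * cmod (cinner x y)) \<and>
      (norm y < \<delta> \<longrightarrow>
         (norm x)\<^sup>2 \<le> \<delta>\<^sup>2 - (norm y)\<^sup>2 + 2 * Re (cinner x y) \<and>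
         \<delta>\<^sup>2 - (norm y)\<^sup>2 + 2 * Re (cinner x y) \<le> \<delta>\<^sup>2 - (norm y)\<^sup>2 + 2 * cmod (cinner x y)))
  \<and>
  \<comment> \<open>Sharpness, witnessed in the real inner product space complex (= R^2)\<close>
   (\<forall>k::real. 0 < k \<and> k < 1 \<longrightarrow>
      (\<exists>(x::complex) y (\<delta>::real). x \<noteq> 0 \<and> y \<noteq> 0 \<and> \<delta> > 0 \<and> norm (x - y) \<le> \<delta> \<and> norm y > \<delta> \<and>
         (norm x)\<^sup>2 * (norm y)\<^sup>2 - (inner x y)\<^sup>2 > k * \<delta>\<^sup>2 * (norm x)\<^sup>2))
  \<and>
   (\<forall>c::real. c < 2 \<longrightarrow>
      (\<exists>(x::complex) y (\<delta>::real). x \<noteq> 0 \<and> y \<noteq> 0 \<and> \<delta> > 0 \<and> norm (x - y) \<le> \<delta> \<and> norm y = \<delta> \<and>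
         (norm x)\<^sup>2 > c * inner x y) \<and>
      (\<exists>(x::complex) y (\<delta>::real). x \<noteq> 0 \<and> y \<noteq> 0 \<and> \<delta> > 0 \<and> norm (x - y) \<le> \<delta> \<and> norm y = \<delta> \<and>
         (norm x)\<^sup>2 > c * \<bar>inner x y\<bar>))
  \<and>
   (\<forall>c::real. c < 2 \<longrightarrow>
      (\<exists>(x::complex) y (\<delta>::real). x \<noteq> 0 \<and> y \<noteq> 0 \<and> \<delta> > 0 \<and> norm (x - y) \<le> \<delta> \<and> norm y < \<delta> \<and>
         (norm x)\<^sup>2 > \<delta>\<^sup>2 - (norm y)\<^sup>2 + c * inner x y) \<and>
      (\<exists>(x::complex) y (\<delta>::real). x \<noteq> 0 \<and> y \<noteq> 0 \<and> \<delta> > 0 \<and> norm (x - y) \<le> \<delta> \<and> norm y < \<delta> \<and>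
         (norm x)\<^sup>2 > \<delta>\<^sup>2 - (norm y)\<^sup>2 + c * \<bar>inner x y\<bar>))"
  apply (intro conjI)
  subgoal
    using Cauchy_Schwarz_ineq
    by (auto simp: power2_norm_eq_inner dest: inner_bounds_of_norm_diff_le)
  subgoal
    using Cauchy_Schwarz_cinner complex_Re_le_cmod
    by (auto simp: cmod_power2 dest: cinner_bounds_of_norm_diff_le)
  subgoal
    using gram_bound_attained by (fastforce simp: mult.assoc)
  subgoal
    using twice_inner_bound_attained by fastforce
  subgoal
    using polarization_bound_attained by fastforce
  done

end
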